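(* Let $p=0$, $0<q<1$, $0<\theta<1$, $\zeta\in(0,\theta)$, and $k<n$ positive integers. Define \[ m_{\mathrm{DD}}=\min_{\alpha,\beta,d}\max\left\{\frac{\theta}{1-\theta}\frac{1}{d\,D_{\mathrm{KL}}(\alpha\|q)},\ \frac{1}{d\,D_{\mathrm{KL}}\big(\alpha\|e^{-d}+(1-e^{-d})q\big)},\ \frac{\theta}{1-\theta}\frac{1}{d\,D_{\mathrm{KL}}(\beta\|(1-q)e^{-d})}\right\}k\log(n/k) \] and \[ m^{\mathrm{Ber}}_{\mathrm{DD}}=\min_{\alpha,\beta,d}\max\left\{\frac{\theta}{1-\theta}\frac{1}{k\,D_{\mathrm{KL}}(\tfrac{\alpha d}{k}\|\tfrac{qd}{k})},\ \frac{1-\zeta}{1-\theta}\frac{1}{k\,D_{\mathrm{KL}}\big(\tfrac{\alpha d}{k}\|\tfrac{(e^{-d}+(1-e^{-d})q)d}{k}\big)},\ \frac{\theta}{1-\theta}\frac{1}{k\,D_{\mathrm{KL}}\big(\tfrac{\beta d}{k}\|\tfrac{e^{-d}(1-q)d}{k}\big)}\right\}k\log(n/k), \] both minima over $d\in(0,\infty)$ (with $d<k$), $\alpha\in\big(q,\ e^{-d}+(1-e^{-d})q\big)$ and $\beta\in\big(0,e^{-d}(1-q)\big)$. Then $m^{\mathrm{Ber}}_{\mathrm{DD}}>m_{\mathrm{DD}}$.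
   Context: $\log$ is the natural logarithm; $D_{\mathrm{KL}}(r\|s)=r\log(r/s)+(1-r)\log\frac{1-r}{1-s}$. (These are the sufficient numbers of tests for noisy DD under the constant-column design and the Bernoulli design on the Z channel, i.e. false-positive probability $p=0$ and false-negative probability $q$; in the general bounds the fourth term, involving a Kullback–Leibler divergence to $0$, is infinite in the denominator and thus vanishes, and has been omitted.) *)

theory Defs
  imports Complex_Main
begin

definition DKL :: "real \<Rightarrow> real \<Rightarrow> real" where
  "DKL r s = r * ln (r / s) + (1 - r) * ln ((1 - r) / (1 - s))"

definition DD_domain :: "real \<Rightarrow> nat \<Rightarrow> (real \<times> real \<times> real) set" where
  "DD_domain q k = {(\<alpha>, \<beta>, d). 0 < d \<and> d < real k \<and>
      q < \<alpha> \<and> \<alpha> < exp (- d) + (1 - exp (- d)) * q \<and>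
      0 < \<beta> \<and> \<beta> < exp (- d) * (1 - q)}"

definition m_DD :: "real \<Rightarrow> real \<Rightarrow> nat \<Rightarrow> nat \<Rightarrow> real" where
  "m_DD q \<theta> k n =
    (INF (\<alpha>, \<beta>, d) \<in> DD_domain q k.
       max (\<theta> / (1 - \<theta>) * (1 / (d * DKL \<alpha> q)))
        (max (1 / (d * DKL \<alpha> (exp (- d) + (1 - exp (- d)) * q)))
             (\<theta> / (1 - \<theta>) * (1 / (d * DKL \<beta> ((1 - q) * exp (- d)))))))
    * real k * ln (real n / real k)"

definition m_DD_Ber :: "real \<Rightarrow> real \<Rightarrow> real \<Rightarrow> nat \<Rightarrow> nat \<Rightarrow> real" where
  "m_DD_Ber q \<theta> \<zeta> k n =
    (INF (\<alpha>, \<beta>, d) \<in> DD_domain q k.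
       max (\<theta> / (1 - \<theta>) * (1 / (real k * DKL (\<alpha> * d / real k) (q * d / real k))))
        (max ((1 - \<zeta>) / (1 - \<theta>) * (1 / (real k *
                 DKL (\<alpha> * d / real k) ((exp (- d) + (1 - exp (- d)) * q) * d / real k))))
             (\<theta> / (1 - \<theta>) * (1 / (real k *
                 DKL (\<beta> * d / real k) (exp (- d) * (1 - q) * d / real k))))))
    * real k * ln (real n / real k)"

end

theory Submission
  imports Defs "HOL-Analysis.Convex"
begin

(*
  Write x = d / k.  The Bernoulli objective replaces each divergence D(a||b) of the constant-column
  objective by D(xa||xb) / x.  Along the ray s |-> (sa, sb) the divergence is strongly convex and
  vanishes at 0, so D(xa||xb) <= (1 - gap) x D(a||b) with a gap proportional to 1 - x, while the
  middle term carries the extra factor (1 - zeta) / (1 - theta) > 1.  Hence the Bernoulli objective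
  beats the constant-column one by a uniform factor as long as d stays away from k.
  Near d = k the constant-column objective is itself far from its infimum: lowering d by delta and
  multiplying alpha - q and beta by e^delta keeps the point admissible, and strong convexity makes
  every divergence grow superlinearly under this rescaling, which more than compensates for the
  smaller d.  Either way every value of the Bernoulli objective is at least l > 1 times the
  infimum of the constant-column objective, and that infimum is positive.
*)

definition strongly_convex_on :: "real set \<Rightarrow> real \<Rightarrow> (real \<Rightarrow> real) \<Rightarrow> bool" where
  "strongly_convex_on C m f \<longleftrightarrow> convex_on C (\<lambda>x. f x - m / 2 * x\<^sup>2)"

lemma strongly_convex_onI_deriv2:
  fixes f f' f'' :: "real \<Rightarrow> real"
  assumes "convex C"
    and "\<And>x. x \<in> C \<Longrightarrow> (f has_real_derivative f' x) (at x)"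
    and "\<And>x. x \<in> C \<Longrightarrow> (f' has_real_derivative f'' x) (at x)"
    and "\<And>x. x \<in> C \<Longrightarrow> m \<le> f'' x"
  shows "strongly_convex_on C m f"
  unfolding strongly_convex_on_def
proof (rule f''_ge0_imp_convex[where f' = "\<lambda>x. f' x - m * x" and f'' = "\<lambda>x. f'' x - m"])
  fix x assume x: "x \<in> C"
  show "((\<lambda>x. f x - m / 2 * x\<^sup>2) has_real_derivative f' x - m * x) (at x)"
    using assms(2)[OF x] by (auto intro!: derivative_eq_intros)
  show "((\<lambda>x. f' x - m * x) has_real_derivative f'' x - m) (at x)"
    using assms(3)[OF x] by (auto intro!: derivative_eq_intros)
  show "0 \<le> f'' x - m"
    using assms(4)[OF x] by simp
qed (fact assms(1))

lemma strongly_convex_on_cong: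
  assumes "\<And>x. x \<in> C \<Longrightarrow> f x = g x"
  shows "strongly_convex_on C m f \<longleftrightarrow> strongly_convex_on C m g"
  using assms unfolding strongly_convex_on_def convex_on_def convex_def by auto

lemma strongly_convex_on_add:
  assumes "strongly_convex_on C m f" "strongly_convex_on C m' g"
  shows "strongly_convex_on C (m + m') (\<lambda>x. f x + g x)"
proof -
  have "convex_on C (\<lambda>x. (f x - m / 2 * x\<^sup>2) + (g x - m' / 2 * x\<^sup>2))"
    using assms unfolding strongly_convex_on_def by (rule convex_on_add)
  moreover have "(\<lambda>x. (f x - m / 2 * x\<^sup>2) + (g x - m' / 2 * x\<^sup>2)) =
      (\<lambda>x. f x + g x - (m + m') / 2 * x\<^sup>2)"
    by (simp add: fun_eq_iff field_simps)
  ultimately show ?thesis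
    unfolding strongly_convex_on_def by simp
qed

lemma strongly_convex_on_mono:
  assumes "strongly_convex_on C m f" "m' \<le> m"
  shows "strongly_convex_on C m' f"
proof -
  have "convex C"
    using assms(1) by (simp add: strongly_convex_on_def convex_on_def)
  then have "convex_on C (\<lambda>x. (m - m') / 2 * x\<^sup>2)"
    using assms(2) convex_on_subset[OF convex_power_even[of 2]] by (intro convex_on_cmul) auto
  with assms(1) have "convex_on C (\<lambda>x. (f x - m / 2 * x\<^sup>2) + (m - m') / 2 * x\<^sup>2)"
    unfolding strongly_convex_on_def by (rule convex_on_add)
  moreover have "(\<lambda>x. (f x - m / 2 * x\<^sup>2) + (m - m') / 2 * x\<^sup>2) = (\<lambda>x. f x - m' / 2 * x\<^sup>2)"
    by (simp add: fun_eq_iff field_simps)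
  ultimately show ?thesis
    unfolding strongly_convex_on_def by simp
qed

lemma strongly_convex_on_Icc_zero:
  assumes "strongly_convex_on {0..T} m f" "f 0 = 0" "0 \<le> t" "t \<le> T"
  shows "T * f t + t * T * (T - t) * (m / 2) \<le> t * f T"
proof (cases "T = 0")
  case False
  with assms(3,4) have T: "0 < T"
    by simp
  have "f t - m / 2 * t\<^sup>2 \<le> (f T - m / 2 * T\<^sup>2 - (f 0 - m / 2 * 0\<^sup>2)) / (T - 0) * (t - 0)
          + (f 0 - m / 2 * 0\<^sup>2)"
    using assms(1,3,4) unfolding strongly_convex_on_def by (intro convex_onD_Icc') auto
  then show ?thesis
    using T assms(2) by (simp add: field_simps power2_eq_square)
qed (use assms in simp)

lemma strongly_convex_on_superlinear:
  assumes "strongly_convex_on {0..c} m f" "f 0 = 0" "1 \<le> c" "r * f 1 \<le> m / 2"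
  shows "c * f 1 * (1 + (c - 1) * r) \<le> f c"
proof -
  have "c * f 1 + c * (c - 1) * (m / 2) \<le> f c"
    using strongly_convex_on_Icc_zero[OF assms(1,2), of 1] assms(3) by simp
  moreover have "c * (c - 1) * (r * f 1) \<le> c * (c - 1) * (m / 2)"
    using assms(3,4) by (intro mult_left_mono) auto
  moreover have "c * f 1 * (1 + (c - 1) * r) = c * f 1 + c * (c - 1) * (r * f 1)"
    by (simp add: algebra_simps)
  ultimately show ?thesis
    by linarith
qed

lemma strongly_convex_on_chord:
  assumes "strongly_convex_on {0..1} m f" "f 0 = 0" "0 \<le> x" "x \<le> 1" "r * f 1 \<le> m / 2"
  shows "f x \<le> x * f 1 * (1 - r * (1 - x))"
proof -
  have "f x + x * (1 - x) * (m / 2) \<le> x * f 1"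
    using strongly_convex_on_Icc_zero[OF assms(1,2,3,4)] by simp
  moreover have "x * (1 - x) * (r * f 1) \<le> x * (1 - x) * (m / 2)"
    using assms(3,4,5) by (intro mult_left_mono) auto
  moreover have "x * f 1 * (1 - r * (1 - x)) = x * f 1 - x * (1 - x) * (r * f 1)"
    by (simp add: algebra_simps)
  ultimately show ?thesis
    by linarith
qed

lemma strongly_convex_on_xlnxy_affine:
  fixes X Y :: "real \<Rightarrow> real"
  assumes "convex C"
    and X: "\<And>s. X s = x0 + x1 * s" and Y: "\<And>s. Y s = y0 + y1 * s"
    and XY: "\<And>s. s \<in> C \<Longrightarrow> 0 < X s \<and> X s \<le> 1 \<and> 0 < Y s \<and> Y s \<le> 1"
  shows "strongly_convex_on C ((x1 * y0 - y1 * x0)\<^sup>2) (\<lambda>s. X s * ln (X s / Y s))"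
proof (rule strongly_convex_onI_deriv2[OF \<open>convex C\<close>])
  fix s assume s: "s \<in> C"
  then have pos: "0 < X s" "0 < Y s" and le1: "X s \<le> 1" "Y s \<le> 1"
    using XY by auto
  have dX: "(X has_real_derivative x1) (at s)" and dY: "(Y has_real_derivative y1) (at s)"
    unfolding X[abs_def] Y[abs_def] by (auto intro!: derivative_eq_intros)
  have cross: "x1 * Y s - y1 * X s = x1 * y0 - y1 * x0"
    unfolding X Y by (simp add: algebra_simps)
  show "((\<lambda>s. X s * ln (X s / Y s)) has_real_derivative
      x1 * ln (X s / Y s) + x1 - y1 * X s / Y s) (at s)"
    using pos by (auto intro!: derivative_eq_intros dX dY simp: field_simps)
  show "((\<lambda>s. x1 * ln (X s / Y s) + x1 - y1 * X s / Y s) has_real_derivative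
      (x1 * y0 - y1 * x0)\<^sup>2 / (X s * (Y s)\<^sup>2)) (at s)"
    unfolding cross[symmetric] using pos
    by (auto intro!: derivative_eq_intros dX dY simp: field_simps power2_eq_square)
  have "0 < X s * (Y s)\<^sup>2" "X s * (Y s)\<^sup>2 \<le> 1"
    using pos le1 by (auto intro: mult_le_one simp: power_le_one)
  then show "(x1 * y0 - y1 * x0)\<^sup>2 \<le> (x1 * y0 - y1 * x0)\<^sup>2 / (X s * (Y s)\<^sup>2)"
    by (simp add: le_divide_eq mult_left_le)
qed

lemma DKL_self [simp]: "DKL a a = 0"
  by (cases "a = 0"; cases "a = 1") (simp_all add: DKL_def)

lemma DKL_le_chi_square:
  assumes "0 < a" "a < 1" "0 < b" "b < 1"
  shows "DKL a b \<le> (a - b)\<^sup>2 / (b * (1 - b))"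
proof -
  have "a * ln (a / b) \<le> a * (a / b - 1)"
    using assms by (intro mult_left_mono ln_le_minus_one) auto
  moreover have "(1 - a) * ln ((1 - a) / (1 - b)) \<le> (1 - a) * ((1 - a) / (1 - b) - 1)"
    using assms by (intro mult_left_mono ln_le_minus_one) auto
  moreover have "a * (a / b - 1) + (1 - a) * ((1 - a) / (1 - b) - 1) = (a - b)\<^sup>2 / (b * (1 - b))"
    using assms by (simp add: field_simps power2_eq_square)
  ultimately show ?thesis
    unfolding DKL_def by linarith
qed

lemma DKL_pos:
  assumes "0 < a" "a < 1" "0 < b" "b < 1" "a \<noteq> b"
  shows "0 < DKL a b"
proof -
  have "ln b - ln a < (b - a) / a"
    using assms by (intro ln_diff_less) auto
  then have "a * (ln b - ln a) < b - a"
    using assms by (simp add: field_simps)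
  moreover have "ln (1 - b) - ln (1 - a) \<le> ((1 - b) - (1 - a)) / (1 - a)"
    using assms by (intro ln_diff_le) auto
  then have "(1 - a) * (ln (1 - b) - ln (1 - a)) \<le> a - b"
    using assms by (simp add: field_simps)
  moreover have "DKL a b = - (a * (ln b - ln a) + (1 - a) * (ln (1 - b) - ln (1 - a)))"
    using assms by (simp add: DKL_def ln_div algebra_simps)
  ultimately show ?thesis
    by linarith
qed

lemma mult_DKL_le_square:
  assumes "0 < a" "a < 1" "0 < b" "b < 1" "0 \<le> r" "r \<le> b * (1 - b)"
  shows "r * DKL a b \<le> (a - b)\<^sup>2"
proof -
  have "r * DKL a b \<le> r * ((a - b)\<^sup>2 / (b * (1 - b)))"
    using assms by (intro mult_left_mono DKL_le_chi_square) auto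
  also have "\<dots> = r / (b * (1 - b)) * (a - b)\<^sup>2"
    by simp
  also have "\<dots> \<le> (a - b)\<^sup>2"
    using assms by (intro mult_left_le_one_le) auto
  finally show ?thesis .
qed

lemma strongly_convex_on_DKL_affine:
  assumes "convex C"
    and dom: "\<And>s. s \<in> C \<Longrightarrow>
      0 < a0 + a1 * s \<and> a0 + a1 * s < 1 \<and> 0 < b0 + b1 * s \<and> b0 + b1 * s < 1"
  shows "strongly_convex_on C ((a1 - b1)\<^sup>2 / 2) (\<lambda>s. DKL (a0 + a1 * s) (b0 + b1 * s))"
proof -
  let ?u = "a1 * b0 - b1 * a0" and ?v = "(- a1) * (1 - b0) - (- b1) * (1 - a0)"
  have "strongly_convex_on C (?u\<^sup>2 + ?v\<^sup>2) (\<lambda>s. DKL (a0 + a1 * s) (b0 + b1 * s))"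
    unfolding DKL_def
  proof (rule strongly_convex_on_add)
    show "strongly_convex_on C (?u\<^sup>2)
        (\<lambda>s. (a0 + a1 * s) * ln ((a0 + a1 * s) / (b0 + b1 * s)))"
      using assms by (intro strongly_convex_on_xlnxy_affine) (auto dest!: dom)
    show "strongly_convex_on C (?v\<^sup>2)
        (\<lambda>s. (1 - (a0 + a1 * s)) * ln ((1 - (a0 + a1 * s)) / (1 - (b0 + b1 * s))))"
      using assms by (intro strongly_convex_on_xlnxy_affine) (auto dest!: dom simp: algebra_simps)
  qed
  moreover have "(a1 - b1)\<^sup>2 / 2 \<le> ?u\<^sup>2 + ?v\<^sup>2"
  proof -
    have "(u - v)\<^sup>2 / 2 \<le> u\<^sup>2 + v\<^sup>2" for u v :: real
      using zero_le_power2[of "u + v"] by (simp add: power2_eq_square field_simps)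
    moreover have "?u - ?v = a1 - b1"
      by (simp add: algebra_simps)
    ultimately show ?thesis
      by metis
  qed
  ultimately show ?thesis
    by (rule strongly_convex_on_mono)
qed

(* On the ray through (a, b) both arguments vanish at s = 0, so the affine lemma above does not
   apply there; instead the first summand of DKL is linear on the ray. *)
lemma DKL_mult_right:
  assumes "0 < a" "0 < b" "0 \<le> s"
  shows "DKL (s * a) (s * b) = s * a * ln (a / b) + (1 - s * a) * ln ((1 - s * a) / (1 - s * b))"
  using assms by (cases "s = 0") (simp_all add: DKL_def)

lemma strongly_convex_on_DKL_mult_right:
  assumes "0 < a" "0 < b" "T * a < 1" "T * b < 1"
  shows "strongly_convex_on {0..T} ((a - b)\<^sup>2) (\<lambda>s. DKL (s * a) (s * b))"
proof -
  let ?g = "\<lambda>s. s * a * ln (a / b) + (1 - s * a) * ln ((1 - s * a) / (1 - s * b))"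
  have "strongly_convex_on {0..T} (0 + (a - b)\<^sup>2) ?g"
  proof (rule strongly_convex_on_add)
    show "strongly_convex_on {0..T} 0 (\<lambda>s. s * a * ln (a / b))"
      by (rule strongly_convex_onI_deriv2[where f' = "\<lambda>_. a * ln (a / b)" and f'' = "\<lambda>_. 0"])
        (auto intro!: derivative_eq_intros)
    have "0 < 1 - s * a \<and> 1 - s * a \<le> 1 \<and> 0 < 1 - s * b \<and> 1 - s * b \<le> 1"
      if "s \<in> {0..T}" for s
    proof -
      have "0 \<le> s * a" "0 \<le> s * b" "s * a \<le> T * a" "s * b \<le> T * b"
        using that assms by (auto intro: mult_right_mono)
      then show ?thesis
        using assms by (intro conjI; linarith)
    qed
    then have "strongly_convex_on {0..T} ((- a * 1 - - b * 1)\<^sup>2)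
        (\<lambda>s. (1 - s * a) * ln ((1 - s * a) / (1 - s * b)))"
      by (intro strongly_convex_on_xlnxy_affine) auto
    then show "strongly_convex_on {0..T} ((a - b)\<^sup>2)
        (\<lambda>s. (1 - s * a) * ln ((1 - s * a) / (1 - s * b)))"
      by (simp add: power2_commute)
  qed
  then show ?thesis
    using assms by (subst strongly_convex_on_cong[where g = ?g]) (auto simp: DKL_mult_right)
qed

lemma DKL_affine_superlinear:
  assumes dom: "\<And>s. 0 \<le> s \<Longrightarrow> s \<le> c \<Longrightarrow>
      0 < a + u * s \<and> a + u * s < 1 \<and> 0 < a + v * s \<and> a + v * s < 1"
    and "1 \<le> c" "0 \<le> r" "4 * r \<le> (a + v) * (1 - (a + v))"
  shows "c * DKL (a + u) (a + v) * (1 + (c - 1) * r) \<le> DKL (a + c * u) (a + c * v)"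
proof -
  have "strongly_convex_on {0..c} ((u - v)\<^sup>2 / 2) (\<lambda>s. DKL (a + u * s) (a + v * s))"
    by (rule strongly_convex_on_DKL_affine) (auto dest: dom)
  moreover have "4 * r * DKL (a + u) (a + v) \<le> (u - v)\<^sup>2"
    using dom[of 1] assms by (intro mult_DKL_le_square[of "a + u" "a + v", simplified]) auto
  ultimately show ?thesis
    using strongly_convex_on_superlinear[of c "(u - v)\<^sup>2 / 2" "\<lambda>s. DKL (a + u * s) (a + v * s)" r]
      \<open>1 \<le> c\<close> by (simp add: mult.commute)
qed

lemma DKL_mult_right_superlinear:
  assumes "0 < a" "0 < b" "c * a < 1" "c * b < 1" "1 \<le> c" "0 \<le> r" "2 * r \<le> b * (1 - b)"
  shows "c * DKL a b * (1 + (c - 1) * r) \<le> DKL (c * a) (c * b)"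
proof -
  have "1 * a \<le> c * a" "1 * b \<le> c * b"
    using assms by (intro mult_right_mono; simp)+
  then have "a < 1" "b < 1"
    using assms by linarith+
  then have "2 * r * DKL a b \<le> (a - b)\<^sup>2"
    using assms by (intro mult_DKL_le_square) auto
  then show ?thesis
    using strongly_convex_on_superlinear[OF strongly_convex_on_DKL_mult_right, of a b c]
      assms by simp
qed

lemma DKL_mult_right_chord:
  assumes "0 < a" "a < 1" "0 < b" "b < 1" "0 \<le> x" "x \<le> 1"
  shows "DKL (x * a) (x * b) \<le> x * DKL a b * (1 - b * (1 - b) / 2 * (1 - x))"
proof -
  have "b * (1 - b) * DKL a b \<le> (a - b)\<^sup>2"
    using assms by (intro mult_DKL_le_square) auto
  then show ?thesis
    using strongly_convex_on_chord[OF strongly_convex_on_DKL_mult_right, of a b x "b * (1 - b) / 2"]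
      assms by simp
qed

lemma scaled_max3_le:
  fixes l :: real
  assumes "0 \<le> l" "l * b1 \<le> a1" "l * b2 \<le> a2" "l * b3 \<le> a3"
  shows "l * max b1 (max b2 b3) \<le> max a1 (max a2 a3)"
  using assms by (auto simp: max_def mult_left_mono)

lemma mult_divide_le_divide:
  fixes l c c' x y :: real
  assumes "0 < x" "0 < y" "l * c * y \<le> c' * x"
  shows "l * (c / x) \<le> c' / y"
  using assms by (simp add: field_simps)

lemma divide_DKL_le_divide_DKL_rescaled:
  fixes a b d K l C C' :: real
  assumes ab: "0 < a" "a < 1" "0 < b" "b < 1" "a \<noteq> b" and d: "0 < d" "d < K"
    and "0 \<le> l" "0 \<le> C" "l * (1 - b * (1 - b) / 2 * (1 - d / K)) * C \<le> C'"
  shows "l * (C / (d * DKL a b)) \<le> C' / (K * DKL (d / K * a) (d / K * b))"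
proof (rule mult_divide_le_divide)
  define x where "x = d / K"
  have x: "0 < x" "x < 1" "K * x = d"
    using d by (simp_all add: x_def)
  have "x * a < 1" "x * b < 1"
    using mult_strict_mono[of x 1 a 1] mult_strict_mono[of x 1 b 1] ab x by auto
  then have D': "0 < DKL (x * a) (x * b)"
    using ab x by (intro DKL_pos) auto
  have D: "0 < DKL a b"
    using ab by (intro DKL_pos)
  then show "0 < d * DKL a b"
    using d by simp
  show "0 < K * DKL (d / K * a) (d / K * b)"
    using D' d by (simp add: x_def)
  have "K * DKL (x * a) (x * b) \<le> K * (x * DKL a b * (1 - b * (1 - b) / 2 * (1 - x)))"
    using ab x d by (intro mult_left_mono DKL_mult_right_chord) auto
  also have "\<dots> = (1 - b * (1 - b) / 2 * (1 - x)) * (d * DKL a b)"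
    unfolding x(3)[symmetric] by (simp add: algebra_simps)
  finally have "l * C * (K * DKL (x * a) (x * b))
      \<le> l * C * ((1 - b * (1 - b) / 2 * (1 - x)) * (d * DKL a b))"
    using assms by (intro mult_left_mono) auto
  also have "\<dots> = (l * (1 - b * (1 - b) / 2 * (1 - x)) * C) * (d * DKL a b)"
    by (simp add: algebra_simps)
  also have "\<dots> \<le> C' * (d * DKL a b)"
    using assms D unfolding x_def by (intro mult_right_mono) auto
  finally show "l * C * (K * DKL (d / K * a) (d / K * b)) \<le> C' * (d * DKL a b)"
    by (simp add: x_def)
qed

lemma rate_gain_divide_le:
  fixes c \<epsilon> l d d' D D' C :: real
  assumes "0 < D" "0 < d" "0 < d'" "1 \<le> c" "0 \<le> \<epsilon>" "0 \<le> C"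
    and D': "c * D * (1 + (c - 1) * \<epsilon>) \<le> D'" and gain: "l * d \<le> d' * c * (1 + (c - 1) * \<epsilon>)"
  shows "l * (C / (d' * D')) \<le> C / (d * D)"
proof (rule mult_divide_le_divide)
  have "0 < c * D * (1 + (c - 1) * \<epsilon>)"
    using assms by (simp add: add_pos_nonneg)
  then show "0 < d' * D'"
    using assms by simp
  show "0 < d * D"
    using assms by simp
  have "l * (d * D) \<le> d' * c * (1 + (c - 1) * \<epsilon>) * D"
    using gain assms by (simp add: mult_right_mono mult.assoc[symmetric])
  also have "\<dots> = d' * (c * D * (1 + (c - 1) * \<epsilon>))"
    by (simp add: algebra_simps)
  also have "\<dots> \<le> d' * D'"
    using D' assms by (intro mult_left_mono) auto
  finally have "C * (l * (d * D)) \<le> C * (d' * D')"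
    using \<open>0 \<le> C\<close> by (rule mult_left_mono)
  then show "l * C * (d * D) \<le> C * (d' * D')"
    by (simp add: ac_simps)
qed

lemma exp_shift_lower_bound:
  fixes \<delta> \<epsilon> :: real
  assumes "0 \<le> \<delta>" "0 \<le> \<epsilon>"
  shows "1 + (1 + \<epsilon>) * \<delta> \<le> exp \<delta> * (1 + (exp \<delta> - 1) * \<epsilon>)"
proof -
  have E: "\<delta> \<le> exp \<delta> - 1"
    using exp_ge_add_one_self[of \<delta>] by linarith
  have "\<delta> * \<epsilon> \<le> (exp \<delta> - 1) * \<epsilon>"
    using E assms(2) by (rule mult_right_mono)
  then have "(1 + \<delta>) * (1 + \<delta> * \<epsilon>) \<le> exp \<delta> * (1 + (exp \<delta> - 1) * \<epsilon>)"
    by (intro mult_mono) (use E assms in auto)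
  moreover have "1 + (1 + \<epsilon>) * \<delta> \<le> (1 + \<delta>) * (1 + \<delta> * \<epsilon>)"
    using assms by (simp add: algebra_simps)
  ultimately show ?thesis
    by linarith
qed

(* These choices make (1 + \<epsilon>) \<delta> = \<epsilon> K / 4, so on d > (1 - \<eta>) K the shift by \<delta> gains the
   factor 1 + \<epsilon> / 4 and loses at most the factor 1 - a. *)
lemma exp_shift_gain:
  fixes \<epsilon> K d :: real
  assumes \<eta>_def: "\<eta> = \<epsilon> / (2 * (1 + \<epsilon>))" and a_def: "a = \<epsilon> / (2 * (2 + \<epsilon>))"
    and \<delta>_def: "\<delta> = a * ((1 - \<eta>) * K)"
    and \<epsilon>: "0 < \<epsilon>" and K: "1 \<le> K" and d: "(1 - \<eta>) * K < d"
  shows "0 < \<delta>" "\<delta> < d" "(1 - a) * (1 + \<epsilon> / 4) * d \<le> (d - \<delta>) * exp \<delta> * (1 + (exp \<delta> - 1) * \<epsilon>)"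
proof -
  have "0 < 1 + \<epsilon>" "0 < 2 + \<epsilon>"
    using \<epsilon> by simp_all
  then have \<eta>: "0 < \<eta>" "\<eta> < 1 / 2" and a: "0 < a" "a < 1"
    and \<eta>_eq: "(1 + \<epsilon>) * (1 - \<eta>) = 1 + \<epsilon> / 2" and a_eq: "a * (1 + \<epsilon> / 2) = \<epsilon> / 4"
    using \<epsilon> by (simp_all add: \<eta>_def a_def field_simps)
  have "(1 + \<epsilon>) * \<delta> = a * K * ((1 + \<epsilon>) * (1 - \<eta>))"
    unfolding \<delta>_def by (simp add: algebra_simps)
  also have "\<dots> = (a * (1 + \<epsilon> / 2)) * K"
    unfolding \<eta>_eq by (simp add: ac_simps)
  also have "\<dots> = \<epsilon> * K / 4"
    unfolding a_eq by simp
  finally have "1 + \<epsilon> / 4 \<le> 1 + (1 + \<epsilon>) * \<delta>"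
    using \<epsilon> K by simp
  have "1 / 2 \<le> (1 - \<eta>) * K"
    using mult_mono[of "1 / 2" "1 - \<eta>" 1 K] \<eta> K by simp
  show "0 < \<delta>"
    using \<eta> a K by (simp add: \<delta>_def)
  have "\<delta> \<le> a * d" "a * d < 1 * d"
    using \<eta> a K d \<open>1 / 2 \<le> (1 - \<eta>) * K\<close> by (auto simp: \<delta>_def intro!: mult_strict_right_mono)
  then show "\<delta> < d"
    by simp
  have "(1 - a) * d \<le> d - \<delta>"
    using \<open>\<delta> \<le> a * d\<close> by (simp add: algebra_simps)
  moreover have "1 + \<epsilon> / 4 \<le> exp \<delta> * (1 + (exp \<delta> - 1) * \<epsilon>)"
    using \<open>1 + \<epsilon> / 4 \<le> 1 + (1 + \<epsilon>) * \<delta>\<close> exp_shift_lower_bound[of \<delta> \<epsilon>] \<open>0 < \<delta>\<close> \<epsilon>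
    by linarith
  ultimately have "((1 - a) * d) * (1 + \<epsilon> / 4) \<le> (d - \<delta>) * (exp \<delta> * (1 + (exp \<delta> - 1) * \<epsilon>))"
    using a \<epsilon> \<open>\<delta> < d\<close> by (intro mult_mono) auto
  then show "(1 - a) * (1 + \<epsilon> / 4) * d \<le> (d - \<delta>) * exp \<delta> * (1 + (exp \<delta> - 1) * \<epsilon>)"
    by (simp add: ac_simps)
qed

lemma cINF_less_cINF_if_scaled:
  fixes f g :: "'a \<Rightarrow> real"
  assumes "S \<noteq> {}" "0 < L" "\<And>x. x \<in> S \<Longrightarrow> L \<le> f x" "1 < l"
    and "\<And>x. x \<in> S \<Longrightarrow> \<exists>y \<in> S. l * f y \<le> g x"
  shows "(INF x \<in> S. f x) < (INF x \<in> S. g x)"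
proof -
  have bdd: "bdd_below (f ` S)"
    using assms(3) by (intro bdd_belowI2) auto
  have "L \<le> (INF x \<in> S. f x)"
    using assms(1,3) by (rule cINF_greatest)
  then have "(INF x \<in> S. f x) < l * (INF x \<in> S. f x)"
    using assms(2,4) by simp
  also have "\<dots> \<le> (INF x \<in> S. g x)"
  proof (rule cINF_greatest[OF assms(1)])
    fix x assume "x \<in> S"
    then obtain y where "y \<in> S" "l * f y \<le> g x"
      using assms(5) by blast
    moreover have "(INF x \<in> S. f x) \<le> f y"
      using bdd \<open>y \<in> S\<close> by (rule cINF_lower)
    then have "l * (INF x \<in> S. f x) \<le> l * f y"
      using assms(4) by (simp add: mult_left_mono)
    ultimately show "l * (INF x \<in> S. f x) \<le> g x"
      by linarith
  qed
  finally show ?thesis .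
qed

definition DD_objective :: "real \<Rightarrow> real \<Rightarrow> real \<times> real \<times> real \<Rightarrow> real" where
  "DD_objective q \<theta> = (\<lambda>(\<alpha>, \<beta>, d).
     max (\<theta> / (1 - \<theta>) * (1 / (d * DKL \<alpha> q)))
      (max (1 / (d * DKL \<alpha> (exp (- d) + (1 - exp (- d)) * q)))
           (\<theta> / (1 - \<theta>) * (1 / (d * DKL \<beta> ((1 - q) * exp (- d)))))))"

definition DD_Ber_objective :: "real \<Rightarrow> real \<Rightarrow> real \<Rightarrow> nat \<Rightarrow> real \<times> real \<times> real \<Rightarrow> real" where
  "DD_Ber_objective q \<theta> \<zeta> k = (\<lambda>(\<alpha>, \<beta>, d).
     max (\<theta> / (1 - \<theta>) * (1 / (real k * DKL (\<alpha> * d / real k) (q * d / real k))))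
      (max ((1 - \<zeta>) / (1 - \<theta>) * (1 / (real k *
               DKL (\<alpha> * d / real k) ((exp (- d) + (1 - exp (- d)) * q) * d / real k))))
           (\<theta> / (1 - \<theta>) * (1 / (real k *
               DKL (\<beta> * d / real k) (exp (- d) * (1 - q) * d / real k))))))"

lemma m_DD_eq:
  "m_DD q \<theta> k n = (INF p \<in> DD_domain q k. DD_objective q \<theta> p) * real k * ln (real n / real k)"
  unfolding m_DD_def DD_objective_def ..

lemma m_DD_Ber_eq:
  "m_DD_Ber q \<theta> \<zeta> k n =
     (INF p \<in> DD_domain q k. DD_Ber_objective q \<theta> \<zeta> k p) * real k * ln (real n / real k)"
  unfolding m_DD_Ber_def DD_Ber_objective_def ..

lemma mem_DD_domain_iff:
  assumes "t = (1 - q) * exp (- d)"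
  shows "(\<alpha>, \<beta>, d) \<in> DD_domain q k \<longleftrightarrow>
    0 < d \<and> d < real k \<and> q < \<alpha> \<and> \<alpha> < q + t \<and> 0 < \<beta> \<and> \<beta> < t"
  using assms unfolding DD_domain_def by (auto simp: algebra_simps)

lemma DD_gap_bounds:
  fixes q d t :: real
  assumes "t = (1 - q) * exp (- d)" "q < 1" "0 < d"
  shows "0 < t" "t < 1 - q"
proof -
  have "(1 - q) * exp (- d) < (1 - q) * 1"
    using assms by (intro mult_strict_left_mono) auto
  then show "0 < t" "t < 1 - q"
    using assms by simp_all
qed

lemma DD_gap_variance_ge:
  fixes q d t K :: real
  assumes "t = (1 - q) * exp (- d)" "0 < q" "q < 1" "0 \<le> d" "d \<le> K"
  shows "q * (1 - q) * exp (- K) \<le> t * (1 - t)"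
proof -
  have "exp (- K) \<le> exp (- d)" "exp (- d) \<le> 1"
    using assms by simp_all
  then have "(1 - q) * exp (- K) \<le> t" "t \<le> 1 - q"
    unfolding assms(1) using assms by (auto intro: mult_left_mono mult_left_le)
  then have "(1 - q) * exp (- K) \<le> t" "q \<le> 1 - t"
    by simp_all
  then have "(1 - q) * exp (- K) * q \<le> t * (1 - t)"
    by (rule mult_mono) (use assms in auto)
  then show ?thesis
    by (simp add: algebra_simps)
qed

lemma DD_threshold_variance_ge:
  fixes q d t :: real
  assumes "t = (1 - q) * exp (- d)" "0 < q" "q < 1" "1 / 2 \<le> d"
  shows "q * (1 - q) / 3 \<le> (q + t) * (1 - (q + t))"
proof -
  have "3 / 2 \<le> exp d"
    using assms exp_ge_add_one_self[of d] by linarith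
  then have "(1 - q) * exp (- d) \<le> (1 - q) * (2 / 3)"
    using assms by (intro mult_left_mono) (auto simp: exp_minus field_simps)
  moreover have "0 < t"
    using assms by simp
  ultimately have "q * ((1 - q) / 3) \<le> (q + t) * (1 - (q + t))"
    using assms by (intro mult_mono) auto
  then show ?thesis
    by simp
qed

lemma DD_domain_nonempty:
  assumes "0 < q" "q < 1" "0 < k"
  shows "DD_domain q k \<noteq> {}"
proof -
  define t where "t = (1 - q) * exp (- (real k / 2))"
  have "0 < t"
    using assms by (simp add: t_def)
  then have "(q + t / 2, t / 2, real k / 2) \<in> DD_domain q k"
    using assms by (subst mem_DD_domain_iff[OF t_def]) auto
  then show ?thesis
    by blast
qed

lemma DD_objective_eq:
  assumes "t = (1 - q) * exp (- d)"
  shows "DD_objective q \<theta> (\<alpha>, \<beta>, d) =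
    max (\<theta> / (1 - \<theta>) / (d * DKL \<alpha> q))
      (max (1 / (d * DKL \<alpha> (q + t))) (\<theta> / (1 - \<theta>) / (d * DKL \<beta> t)))"
proof -
  have "exp (- d) + (1 - exp (- d)) * q = q + t"
    using assms by (simp add: algebra_simps)
  then show ?thesis
    unfolding DD_objective_def prod.case assms[symmetric] by simp
qed

lemma DD_Ber_objective_eq:
  assumes "t = (1 - q) * exp (- d)"
  shows "DD_Ber_objective q \<theta> \<zeta> k (\<alpha>, \<beta>, d) =
    max (\<theta> / (1 - \<theta>) / (real k * DKL (d / real k * \<alpha>) (d / real k * q)))
      (max ((1 - \<zeta>) / (1 - \<theta>) / (real k * DKL (d / real k * \<alpha>) (d / real k * (q + t))))
           (\<theta> / (1 - \<theta>) / (real k * DKL (d / real k * \<beta>) (d / real k * t))))"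
proof -
  have "exp (- d) + (1 - exp (- d)) * q = q + t" "exp (- d) * (1 - q) = t"
    using assms by (simp_all add: algebra_simps)
  then show ?thesis
    unfolding DD_Ber_objective_def prod.case by (simp add: ac_simps)
qed

lemma DD_objective_lower_bound:
  assumes "p \<in> DD_domain q k" "0 < q" "q < 1" "0 < \<theta>" "\<theta> < 1"
  shows "\<theta> / (1 - \<theta>) * (q / (real k * (1 - q))) \<le> DD_objective q \<theta> p"
proof -
  obtain \<alpha> \<beta> d where p: "p = (\<alpha>, \<beta>, d)"
    by (cases p)
  define t where "t = (1 - q) * exp (- d)"
  have dom: "0 < d" "d < real k" "0 < \<beta>" "\<beta> < t"
    using assms(1) by (simp_all add: p mem_DD_domain_iff[OF t_def])
  have t: "0 < t" "t < 1 - q" "t < 1"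
    using DD_gap_bounds[OF t_def] dom assms by auto
  have "DKL \<beta> t \<le> (\<beta> - t)\<^sup>2 / (t * (1 - t))"
    using dom t assms by (intro DKL_le_chi_square) auto
  also have "\<dots> \<le> t\<^sup>2 / (t * (1 - t))"
    using dom t by (intro divide_right_mono) (auto simp: power2_commute[of \<beta>] intro!: power_mono)
  also have "\<dots> = t / (1 - t)"
    using t by (simp add: power2_eq_square)
  also have "\<dots> \<le> (1 - q) / q"
    using t assms by (simp add: field_simps)
  finally have "d * DKL \<beta> t \<le> real k * ((1 - q) / q)"
    using dom t DKL_pos[of \<beta> t] by (intro mult_mono) auto
  then have "q / (real k * (1 - q)) \<le> 1 / (d * DKL \<beta> t)"
    using dom t assms DKL_pos[of \<beta> t] by (simp add: field_simps)
  then have "\<theta> / (1 - \<theta>) * (q / (real k * (1 - q))) \<le> \<theta> / (1 - \<theta>) / (d * DKL \<beta> t)"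
    using assms by (simp add: mult_left_mono divide_inverse)
  then show ?thesis
    unfolding p DD_objective_eq[OF t_def] by linarith
qed

lemma DD_objective_nonneg:
  assumes "p \<in> DD_domain q k" "0 < q" "q < 1" "0 < \<theta>" "\<theta> < 1"
  shows "0 \<le> DD_objective q \<theta> p"
proof -
  have "0 \<le> \<theta> / (1 - \<theta>) * (q / (real k * (1 - q)))"
    using assms by simp
  also have "\<dots> \<le> DD_objective q \<theta> p"
    using assms by (rule DD_objective_lower_bound)
  finally show ?thesis .
qed

lemma DD_Ber_objective_ge_scaled:
  assumes p: "(\<alpha>, \<beta>, d) \<in> DD_domain q k" and q: "0 < q" "q < 1" and \<theta>: "0 < \<theta>" "\<theta> < 1"
    and l: "0 \<le> l" "l \<le> (1 - \<zeta>) / (1 - \<theta>)" "l * (1 - \<rho>) \<le> 1"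
    and \<rho>: "\<rho> \<le> q * (1 - q) * exp (- real k) / 2 * (1 - d / real k)"
  shows "l * DD_objective q \<theta> (\<alpha>, \<beta>, d) \<le> DD_Ber_objective q \<theta> \<zeta> k (\<alpha>, \<beta>, d)"
proof -
  define t where "t = (1 - q) * exp (- d)"
  have dom: "0 < d" "d < real k" "q < \<alpha>" "\<alpha> < q + t" "0 < \<beta>" "\<beta> < t"
    using p by (simp_all add: mem_DD_domain_iff[OF t_def])
  have t: "0 < t" "t < 1 - q"
    using DD_gap_bounds[OF t_def] dom q by auto
  have "0 \<le> 1 - d / real k"
    using dom by simp
  have gain: "l * (1 - b * (1 - b) / 2 * (1 - d / real k)) * (\<theta> / (1 - \<theta>)) \<le> \<theta> / (1 - \<theta>)"
    if "q * (1 - q) * exp (- real k) \<le> b * (1 - b)" for b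
  proof -
    have "q * (1 - q) * exp (- real k) / 2 * (1 - d / real k) \<le> b * (1 - b) / 2 * (1 - d / real k)"
      using that \<open>0 \<le> 1 - d / real k\<close> by (intro mult_right_mono divide_right_mono) auto
    then have "l * (1 - b * (1 - b) / 2 * (1 - d / real k)) \<le> l * (1 - \<rho>)"
      using l \<rho> by (intro mult_left_mono) auto
    then have "l * (1 - b * (1 - b) / 2 * (1 - d / real k)) \<le> 1"
      using l by linarith
    from mult_right_mono[OF this, of "\<theta> / (1 - \<theta>)"] show ?thesis
      using \<theta> by simp
  qed
  have "q * (1 - q) * exp (- real k) \<le> q * (1 - q) * 1"
    using q by (intro mult_left_mono) auto
  then have gain_q: "l * (1 - q * (1 - q) / 2 * (1 - d / real k)) * (\<theta> / (1 - \<theta>)) \<le> \<theta> / (1 - \<theta>)"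
    by (intro gain) simp
  have gain_t: "l * (1 - t * (1 - t) / 2 * (1 - d / real k)) * (\<theta> / (1 - \<theta>)) \<le> \<theta> / (1 - \<theta>)"
    using dom q by (intro gain DD_gap_variance_ge[OF t_def]) auto
  have "l * (1 - (q + t) * (1 - (q + t)) / 2 * (1 - d / real k)) \<le> l"
    using l t q \<open>0 \<le> 1 - d / real k\<close> by (intro mult_left_le) auto
  then have gain_qt: "l * (1 - (q + t) * (1 - (q + t)) / 2 * (1 - d / real k)) * 1 \<le> (1 - \<zeta>) / (1 - \<theta>)"
    using l by linarith
  show ?thesis
    unfolding DD_objective_eq[OF t_def] DD_Ber_objective_eq[OF t_def]
    using dom t q \<theta> l gain_q gain_t gain_qt
    by (intro scaled_max3_le divide_DKL_le_divide_DKL_rescaled) auto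
qed

(* \<epsilon> is a common lower bound for the three superlinearity rates supplied by the scaling lemmas:
   q (1 - q) / 4, (q + t) (1 - (q + t)) / 4 \<ge> q (1 - q) / 12 and t (1 - t) / 2 \<ge> q (1 - q) e^-k / 2. *)
lemma DD_shift_divergence_gain:
  assumes p: "(\<alpha>, \<beta>, d) \<in> DD_domain q k" and q: "0 < q" "q < 1"
    and d: "1 / 2 \<le> d" and \<delta>: "0 < \<delta>" "\<delta> < d"
    and c: "c = exp \<delta>" and t: "t = (1 - q) * exp (- d)"
    and \<epsilon>: "\<epsilon> = q * (1 - q) * exp (- real k) / 12"
  shows "c * DKL \<alpha> q * (1 + (c - 1) * \<epsilon>) \<le> DKL (q + c * (\<alpha> - q)) q"
    and "c * DKL \<alpha> (q + t) * (1 + (c - 1) * \<epsilon>) \<le> DKL (q + c * (\<alpha> - q)) (q + c * t)"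
    and "c * DKL \<beta> t * (1 + (c - 1) * \<epsilon>) \<le> DKL (c * \<beta>) (c * t)"
proof -
  have dom: "0 < d" "d < real k" "q < \<alpha>" "\<alpha> < q + t" "0 < \<beta>" "\<beta> < t"
    using p by (simp_all add: mem_DD_domain_iff[OF t])
  have "0 < t" "t < 1 - q"
    using DD_gap_bounds[OF t] dom q by auto
  have "c * t = (1 - q) * exp (- (d - \<delta>))"
    by (simp add: c t exp_diff exp_minus field_simps)
  then have ct: "0 < c * t" "c * t < 1 - q"
    using DD_gap_bounds[of "c * t" q "d - \<delta>"] \<delta> q by auto
  have "1 \<le> c"
    using \<delta> by (simp add: c)
  have "0 \<le> \<epsilon>" "\<epsilon> \<le> q * (1 - q) / 12"
    using q by (auto simp: \<epsilon> mult_left_le)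
  have seg: "0 \<le> (\<alpha> - q) * s \<and> (\<alpha> - q) * s \<le> t * s \<and> 0 \<le> t * s \<and> t * s \<le> c * t"
    if "0 \<le> s" "s \<le> c" for s
  proof -
    have "(\<alpha> - q) * s \<le> t * s" "t * s \<le> t * c"
      using that dom \<open>0 < t\<close> by (auto intro: mult_right_mono mult_left_mono)
    then show ?thesis
      using that dom \<open>0 < t\<close> by (simp add: mult.commute)
  qed
  have "c * DKL (q + (\<alpha> - q)) (q + 0) * (1 + (c - 1) * \<epsilon>) \<le> DKL (q + c * (\<alpha> - q)) (q + c * 0)"
  proof (rule DKL_affine_superlinear)
    show "0 < q + (\<alpha> - q) * s \<and> q + (\<alpha> - q) * s < 1 \<and> 0 < q + 0 * s \<and> q + 0 * s < 1"
      if "0 \<le> s" "s \<le> c" for s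
      using seg[OF that] ct q by auto
    show "4 * \<epsilon> \<le> (q + 0) * (1 - (q + 0))"
      using \<open>0 \<le> \<epsilon>\<close> \<open>\<epsilon> \<le> q * (1 - q) / 12\<close> by (simp add: algebra_simps)
  qed (use \<open>1 \<le> c\<close> \<open>0 \<le> \<epsilon>\<close> in auto)
  then show "c * DKL \<alpha> q * (1 + (c - 1) * \<epsilon>) \<le> DKL (q + c * (\<alpha> - q)) q"
    by simp
  have "4 * \<epsilon> \<le> (q + t) * (1 - (q + t))"
    using DD_threshold_variance_ge[OF t q d] \<open>\<epsilon> \<le> q * (1 - q) / 12\<close> by simp
  then have "c * DKL (q + (\<alpha> - q)) (q + t) * (1 + (c - 1) * \<epsilon>) \<le> DKL (q + c * (\<alpha> - q)) (q + c * t)"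
  proof (intro DKL_affine_superlinear)
    show "0 < q + (\<alpha> - q) * s \<and> q + (\<alpha> - q) * s < 1 \<and> 0 < q + t * s \<and> q + t * s < 1"
      if "0 \<le> s" "s \<le> c" for s
      using seg[OF that] ct q by auto
  qed (use \<open>1 \<le> c\<close> \<open>0 \<le> \<epsilon>\<close> in auto)
  then show "c * DKL \<alpha> (q + t) * (1 + (c - 1) * \<epsilon>) \<le> DKL (q + c * (\<alpha> - q)) (q + c * t)"
    by simp
  have "q * (1 - q) * exp (- real k) \<le> t * (1 - t)" "0 \<le> t * (1 - t)"
    using DD_gap_variance_ge[OF t q, of "real k"] dom \<open>0 < t\<close> \<open>t < 1 - q\<close> q by auto
  then have "2 * \<epsilon> \<le> t * (1 - t)"
    unfolding \<epsilon> by linarith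
  moreover have "c * \<beta> < 1" "c * t < 1"
    using mult_strict_left_mono[OF \<open>\<beta> < t\<close>, of c] \<open>1 \<le> c\<close> ct q by linarith+
  ultimately show "c * DKL \<beta> t * (1 + (c - 1) * \<epsilon>) \<le> DKL (c * \<beta>) (c * t)"
    using dom \<open>0 < t\<close> \<open>1 \<le> c\<close> \<open>0 \<le> \<epsilon>\<close> by (intro DKL_mult_right_superlinear) auto
qed

lemma DD_objective_shift:
  assumes p: "(\<alpha>, \<beta>, d) \<in> DD_domain q k" and q: "0 < q" "q < 1" and \<theta>: "0 < \<theta>" "\<theta> < 1"
    and d: "1 / 2 \<le> d" and \<delta>: "0 < \<delta>" "\<delta> < d" and "0 \<le> l"
    and gain: "l * d \<le> (d - \<delta>) * exp \<delta> * (1 + (exp \<delta> - 1) * (q * (1 - q) * exp (- real k) / 12))"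
  shows "(q + exp \<delta> * (\<alpha> - q), exp \<delta> * \<beta>, d - \<delta>) \<in> DD_domain q k"
    and "l * DD_objective q \<theta> (q + exp \<delta> * (\<alpha> - q), exp \<delta> * \<beta>, d - \<delta>) \<le> DD_objective q \<theta> (\<alpha>, \<beta>, d)"
proof -
  define c where "c = exp \<delta>"
  define \<epsilon> where "\<epsilon> = q * (1 - q) * exp (- real k) / 12"
  define t where "t = (1 - q) * exp (- d)"
  have dom: "0 < d" "d < real k" "q < \<alpha>" "\<alpha> < q + t" "0 < \<beta>" "\<beta> < t"
    using p by (simp_all add: mem_DD_domain_iff[OF t_def])
  have ct: "c * t = (1 - q) * exp (- (d - \<delta>))"
    by (simp add: c_def t_def exp_diff exp_minus field_simps)
  have "1 \<le> c" "0 \<le> \<epsilon>"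
    using \<delta> q by (simp_all add: c_def \<epsilon>_def)
  have "c * (\<alpha> - q) < c * t" "c * \<beta> < c * t"
    using dom \<open>1 \<le> c\<close> by simp_all
  then show "(q + exp \<delta> * (\<alpha> - q), exp \<delta> * \<beta>, d - \<delta>) \<in> DD_domain q k"
    unfolding mem_DD_domain_iff[OF ct] c_def[symmetric]
    using dom \<delta> \<open>1 \<le> c\<close> by auto
  note gains = DD_shift_divergence_gain[OF p q d \<delta> c_def t_def \<epsilon>_def]
  have "0 < DKL \<alpha> q" "0 < DKL \<alpha> (q + t)" "0 < DKL \<beta> t" "0 \<le> \<theta> / (1 - \<theta>)"
    using dom DD_gap_bounds[OF t_def] q \<theta> by (auto intro!: DKL_pos)
  moreover have "l * d \<le> (d - \<delta>) * c * (1 + (c - 1) * \<epsilon>)"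
    using gain by (simp add: c_def \<epsilon>_def)
  ultimately show "l * DD_objective q \<theta> (q + exp \<delta> * (\<alpha> - q), exp \<delta> * \<beta>, d - \<delta>)
      \<le> DD_objective q \<theta> (\<alpha>, \<beta>, d)"
    unfolding DD_objective_eq[OF t_def] DD_objective_eq[OF ct] c_def[symmetric]
    using \<open>0 \<le> l\<close> \<open>1 \<le> c\<close> \<open>0 \<le> \<epsilon>\<close> dom \<delta> gains
    by (intro scaled_max3_le rate_gain_divide_le) auto
qed

lemma DD_objective_improvable_near_k:
  assumes q: "0 < q" "q < 1" and \<theta>: "0 < \<theta>" "\<theta> < 1" and "0 < k"
  obtains \<eta> l where "0 < \<eta>" "\<eta> < 1" "1 < l"
    "\<And>\<alpha> \<beta> d. (\<alpha>, \<beta>, d) \<in> DD_domain q k \<Longrightarrow> (1 - \<eta>) * real k < d \<Longrightarrow>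
       \<exists>p' \<in> DD_domain q k. l * DD_objective q \<theta> p' \<le> DD_objective q \<theta> (\<alpha>, \<beta>, d)"
proof -
  define \<epsilon> where "\<epsilon> = q * (1 - q) * exp (- real k) / 12"
  define \<eta> where "\<eta> = \<epsilon> / (2 * (1 + \<epsilon>))"
  define a where "a = \<epsilon> / (2 * (2 + \<epsilon>))"
  define \<delta> where "\<delta> = a * ((1 - \<eta>) * real k)"
  have \<epsilon>: "0 < \<epsilon>"
    using q by (simp add: \<epsilon>_def)
  then have "0 < \<eta>" "\<eta> < 1 / 2" "0 < a" "a * (1 + \<epsilon> / 2) = \<epsilon> / 4"
    by (simp_all add: \<eta>_def a_def field_simps)
  moreover have "0 < a * \<epsilon>"
    using \<epsilon> calculation by simp
  ultimately have "1 < (1 - a) * (1 + \<epsilon> / 4)"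
    by (simp add: algebra_simps)
  moreover have "\<exists>p' \<in> DD_domain q k.
      (1 - a) * (1 + \<epsilon> / 4) * DD_objective q \<theta> p' \<le> DD_objective q \<theta> (\<alpha>, \<beta>, d)"
    if p: "(\<alpha>, \<beta>, d) \<in> DD_domain q k" and d: "(1 - \<eta>) * real k < d" for \<alpha> \<beta> d
  proof -
    have "1 \<le> real k"
      using \<open>0 < k\<close> by simp
    note shift = exp_shift_gain[OF \<eta>_def a_def \<delta>_def \<epsilon> this d]
    have "1 / 2 \<le> d"
      using mult_mono[of "1 / 2" "1 - \<eta>" 1 "real k"] \<open>\<eta> < 1 / 2\<close> \<open>1 \<le> real k\<close> d by simp
    then show ?thesis
      using DD_objective_shift[OF p q \<theta> _ shift(1,2), of "(1 - a) * (1 + \<epsilon> / 4)"] shift(3)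
        \<open>1 < (1 - a) * (1 + \<epsilon> / 4)\<close> by (auto simp: \<epsilon>_def)
  qed
  ultimately show ?thesis
    using \<open>0 < \<eta>\<close> \<open>\<eta> < 1 / 2\<close> by (intro that[of \<eta> "(1 - a) * (1 + \<epsilon> / 4)"]) auto
qed

lemma DD_Ber_objective_gain_away_from_k:
  assumes q: "0 < q" "q < 1" and \<theta>: "0 < \<theta>" "\<theta> < 1" and "\<zeta> < \<theta>" "0 < \<eta>" "\<eta> \<le> 1"
  obtains l where "1 < l"
    "\<And>\<alpha> \<beta> d. (\<alpha>, \<beta>, d) \<in> DD_domain q k \<Longrightarrow> d \<le> (1 - \<eta>) * real k \<Longrightarrow>
       l * DD_objective q \<theta> (\<alpha>, \<beta>, d) \<le> DD_Ber_objective q \<theta> \<zeta> k (\<alpha>, \<beta>, d)"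
proof -
  define \<rho> where "\<rho> = q * (1 - q) * exp (- real k) / 2 * \<eta>"
  define l where "l = min ((1 - \<zeta>) / (1 - \<theta>)) (1 / (1 - \<rho>))"
  have "q * (1 - q) * exp (- real k) * \<eta> \<le> 1"
    using q \<open>0 < \<eta>\<close> \<open>\<eta> \<le> 1\<close> by (intro mult_le_one) (auto simp: mult_le_one)
  then have \<rho>: "0 < \<rho>" "\<rho> < 1"
    using q \<open>0 < \<eta>\<close> unfolding \<rho>_def by auto
  have "1 < l"
    using \<rho> \<theta> \<open>\<zeta> < \<theta>\<close> by (simp add: l_def field_simps)
  moreover have "l * DD_objective q \<theta> (\<alpha>, \<beta>, d) \<le> DD_Ber_objective q \<theta> \<zeta> k (\<alpha>, \<beta>, d)"
    if p: "(\<alpha>, \<beta>, d) \<in> DD_domain q k" and d: "d \<le> (1 - \<eta>) * real k" for \<alpha> \<beta> d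
  proof (rule DD_Ber_objective_ge_scaled[OF p q \<theta>])
    show "0 \<le> l"
      using \<open>1 < l\<close> by simp
    show "l \<le> (1 - \<zeta>) / (1 - \<theta>)"
      by (simp add: l_def)
    have "l * (1 - \<rho>) \<le> 1 / (1 - \<rho>) * (1 - \<rho>)"
      using \<rho> by (intro mult_right_mono) (auto simp: l_def)
    then show "l * (1 - \<rho>) \<le> 1"
      using \<rho> by simp
    have "0 < real k"
      using p by (simp add: DD_domain_def)
    then have "\<eta> \<le> 1 - d / real k"
      using d by (simp add: field_simps)
    then show "\<rho> \<le> q * (1 - q) * exp (- real k) / 2 * (1 - d / real k)"
      unfolding \<rho>_def using q by (intro mult_left_mono) auto
  qed
  ultimately show ?thesis
    using that by blast
qed

lemma DD_Ber_objective_uniform_gain: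
  assumes q: "0 < q" "q < 1" and \<theta>: "0 < \<theta>" "\<theta> < 1" and "\<zeta> < \<theta>" "0 < k"
  obtains l where "1 < l" "\<And>p. p \<in> DD_domain q k \<Longrightarrow>
    \<exists>p' \<in> DD_domain q k. l * DD_objective q \<theta> p' \<le> DD_Ber_objective q \<theta> \<zeta> k p"
proof -
  obtain \<eta> l1 where \<eta>: "0 < \<eta>" "\<eta> < 1" and "1 < l1"
    and near: "\<And>\<alpha> \<beta> d. (\<alpha>, \<beta>, d) \<in> DD_domain q k \<Longrightarrow> (1 - \<eta>) * real k < d \<Longrightarrow>
      \<exists>p' \<in> DD_domain q k. l1 * DD_objective q \<theta> p' \<le> DD_objective q \<theta> (\<alpha>, \<beta>, d)"
    using DD_objective_improvable_near_k[OF q \<theta> \<open>0 < k\<close>] by metis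
  obtain l2 where "1 < l2"
    and away: "\<And>\<alpha> \<beta> d. (\<alpha>, \<beta>, d) \<in> DD_domain q k \<Longrightarrow> d \<le> (1 - \<eta>) * real k \<Longrightarrow>
      l2 * DD_objective q \<theta> (\<alpha>, \<beta>, d) \<le> DD_Ber_objective q \<theta> \<zeta> k (\<alpha>, \<beta>, d)"
    using DD_Ber_objective_gain_away_from_k[OF q \<theta> \<open>\<zeta> < \<theta>\<close>, of \<eta> k] \<eta> by auto
  have "\<exists>p' \<in> DD_domain q k.
      min l1 l2 * DD_objective q \<theta> p' \<le> DD_Ber_objective q \<theta> \<zeta> k (\<alpha>, \<beta>, d)"
    if p: "(\<alpha>, \<beta>, d) \<in> DD_domain q k" for \<alpha> \<beta> d
  proof (cases "d \<le> (1 - \<eta>) * real k")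
    case True
    have "min l1 l2 * DD_objective q \<theta> (\<alpha>, \<beta>, d) \<le> l2 * DD_objective q \<theta> (\<alpha>, \<beta>, d)"
      using DD_objective_nonneg[OF p q \<theta>] by (intro mult_right_mono) auto
    then show ?thesis
      using away[OF p True] p by force
  next
    case False
    then obtain p' where p': "p' \<in> DD_domain q k"
      and "l1 * DD_objective q \<theta> p' \<le> DD_objective q \<theta> (\<alpha>, \<beta>, d)"
      using near[OF p] by auto
    moreover have "min l1 l2 * DD_objective q \<theta> p' \<le> l1 * DD_objective q \<theta> p'"
      using DD_objective_nonneg[OF p' q \<theta>] by (intro mult_right_mono) auto
    moreover have "d < real k"
      using p by (simp add: DD_domain_def)
    then have "1 * DD_objective q \<theta> (\<alpha>, \<beta>, d) \<le> DD_Ber_objective q \<theta> \<zeta> k (\<alpha>, \<beta>, d)"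
      using q \<theta> \<open>\<zeta> < \<theta>\<close> \<open>0 < k\<close>
      by (intro DD_Ber_objective_ge_scaled[OF p q \<theta>, of 1 \<zeta> 0]) simp_all
    ultimately show ?thesis
      by force
  qed
  then show ?thesis
    using \<open>1 < l1\<close> \<open>1 < l2\<close> by (intro that[of "min l1 l2"]) force+
qed

theorem proposition2p16:
  fixes q \<theta> \<zeta> :: real and k n :: nat
  assumes "0 < q" "q < 1" "0 < \<theta>" "\<theta> < 1" "0 < \<zeta>" "\<zeta> < \<theta>"
    and "0 < k" "k < n"
  shows "m_DD_Ber q \<theta> \<zeta> k n > m_DD q \<theta> k n"
proof -
  obtain l where "1 < l" and gain: "\<And>p. p \<in> DD_domain q k \<Longrightarrow>
      \<exists>p' \<in> DD_domain q k. l * DD_objective q \<theta> p' \<le> DD_Ber_objective q \<theta> \<zeta> k p"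
    using DD_Ber_objective_uniform_gain[of q \<theta> \<zeta> k] assms by blast
  have "(INF p \<in> DD_domain q k. DD_objective q \<theta> p) <
      (INF p \<in> DD_domain q k. DD_Ber_objective q \<theta> \<zeta> k p)"
  proof (rule cINF_less_cINF_if_scaled[OF _ _ _ \<open>1 < l\<close> gain])
    show "DD_domain q k \<noteq> {}"
      using assms by (intro DD_domain_nonempty)
    show "0 < \<theta> / (1 - \<theta>) * (q / (real k * (1 - q)))"
      using assms by simp
    show "\<theta> / (1 - \<theta>) * (q / (real k * (1 - q))) \<le> DD_objective q \<theta> p"
      if "p \<in> DD_domain q k" for p
      using that assms by (intro DD_objective_lower_bound)
  qed
  moreover have "0 < real k * ln (real n / real k)"
    using assms by simp
  ultimately show ?thesis
    unfolding m_DD_eq m_DD_Ber_eq mult.assoc by (rule mult_strict_right_mono)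
qed

end
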